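(* Let $d\ge3$, $0<z<1$, $0<\alpha<1/2$, and for $\beta>0$ set $y=y(\beta)=-\log(z)/\beta$. Let $r_1,\dots,r_d$ be independent with distribution $\alpha\delta_{-1}+(1-2\alpha)\delta_0+\alpha\delta_1$, let $\rho_i(\sigma)=\frac{1+\sigma r_i}{2}$ for $\sigma=\pm1$, and \[X_1=\sum_{\tau\in\{\pm1\}}\prod_{h=1}^d\left(1-(1-e^{-\beta})\rho_h(\tau)\right),\qquad X_2=1-(1-e^{-\beta})\sum_{\tau\in\{\pm1\}}\rho_1(\tau)\rho_2(\tau).\] Then \[\lim_{\beta\to\infty}\frac{1}{\beta y}\left(\log\mathbb{E}[X_1^y]-\frac d2\log\mathbb{E}[X_2^y]\right)=F_d(\alpha,z),\] where $F_d(\alpha,z)=-\frac{\log(\zeta\mathcal{A}^d\xi)}{\log z}+\frac{d\log(1-2\alpha^2+2\alpha^2z)}{2\log z}$, $\mathcal{A}=(1-2\alpha)I+2\alpha\sqrt z\,\mathcal{M}$, $I$ is the $(d+1)\times(d+1)$ identity, $\zeta=(1,0,\dots,0)\in\mathbb{R}^{1\times(d+1)}$, $\xi=(1,z^{-1/2},z^{-1},\dots,z^{-d/2})^T$, and $\mathcal{M}$ is the $(d+1)\times(d+1)$ matrix indexed by $0,\dots,d$ with $\mathcal{M}_{0,1}=\mathcal{M}_{d,d-1}=1$, $\mathcal{M}_{i,i-1}=\mathcal{M}_{i,i+1}=1/2$ for $1\le i\le d-1$, and all other entries $0$.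
   Context: $\delta_x$ denotes the point mass at $x$. *)

theory Defs
  imports "HOL-Probability.Probability" "Jordan_Normal_Form.Matrix"
begin

definition rdist :: "real \<Rightarrow> real pmf" where
  "rdist \<alpha> = embed_pmf (\<lambda>x. if x = -1 then \<alpha> else if x = 0 then 1 - 2*\<alpha>
                               else if x = 1 then \<alpha> else 0)"

definition rjoint :: "nat \<Rightarrow> real \<Rightarrow> (nat \<Rightarrow> real) pmf" where
  "rjoint d \<alpha> = Pi_pmf {1..d} 0 (\<lambda>_. rdist \<alpha>)"

definition rho :: "(nat \<Rightarrow> real) \<Rightarrow> nat \<Rightarrow> real \<Rightarrow> real" where
  "rho r i \<sigma> = (1 + \<sigma> * r i) / 2"

definition X1 :: "nat \<Rightarrow> real \<Rightarrow> (nat \<Rightarrow> real) \<Rightarrow> real" where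
  "X1 d \<beta> r = (\<Sum>\<tau>\<in>{-1, 1::real}. \<Prod>h=1..d. 1 - (1 - exp (-\<beta>)) * rho r h \<tau>)"

definition X2 :: "real \<Rightarrow> (nat \<Rightarrow> real) \<Rightarrow> real" where
  "X2 \<beta> r = 1 - (1 - exp (-\<beta>)) * (\<Sum>\<tau>\<in>{-1, 1::real}. rho r 1 \<tau> * rho r 2 \<tau>)"

definition Mmat :: "nat \<Rightarrow> real mat" where
  "Mmat d = mat (d+1) (d+1) (\<lambda>(i, j).
     if i = 0 then (if j = 1 then 1 else 0)
     else if i = d then (if j = d - 1 then 1 else 0)
     else if j = i - 1 \<or> j = i + 1 then 1/2 else 0)"

definition Amat :: "nat \<Rightarrow> real \<Rightarrow> real \<Rightarrow> real mat" where
  "Amat d \<alpha> z = (1 - 2*\<alpha>) \<cdot>\<^sub>m 1\<^sub>m (d+1) + (2 * \<alpha> * sqrt z) \<cdot>\<^sub>m Mmat d"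

definition xi :: "nat \<Rightarrow> real \<Rightarrow> real vec" where
  "xi d z = vec (d+1) (\<lambda>k. z powr (- real k / 2))"

definition zeta :: "nat \<Rightarrow> real vec" where
  "zeta d = unit_vec (d+1) 0"

definition Fd :: "nat \<Rightarrow> real \<Rightarrow> real \<Rightarrow> real" where
  "Fd d \<alpha> z = - ln (zeta d \<bullet> ((Amat d \<alpha> z ^\<^sub>m d) *\<^sub>v xi d z)) / ln z
      + real d * ln (1 - 2*\<alpha>^2 + 2*\<alpha>^2*z) / (2 * ln z)"

end

theory Submission
  imports Defs "HOL-Real_Asymp.Real_Asymp"
begin

(* For r in {-1,0,1}^d write D = sum r_h and N = sum |r_h| (position and number of moves of a
   lazy walk with steps r_h). Each factor of X1 and X2 equals e^(-beta t) times a factor with a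
   positive limit, so that X1 = e^(-beta (N - |D|)/2) * O(1) and X2 = e^(-beta max(r_1 r_2, 0)) * O(1).
   With y = -ln z / beta the exponential becomes z^t and the O(1) factor tends to 1, hence, the
   support being finite, E[X1^y] -> E[z^((N - |D|)/2)] and E[X2^y] -> 1 - 2 alpha^2 + 2 alpha^2 z.
   Started at offset j, the first expectation satisfies the three-term recursion encoded by A, and
   it is even in j; that symmetry is why row 0 of M carries the entry 1 rather than 1/2. *)

lemma pmf_rdist:
  assumes "0 \<le> \<alpha>" "\<alpha> \<le> 1/2"
  shows "pmf (rdist \<alpha>) x = (if x = -1 then \<alpha> else if x = 0 then 1 - 2*\<alpha> else if x = 1 then \<alpha> else 0)"
  unfolding rdist_def
proof (rule pmf_embed_pmf)
  have "(\<Sum>x\<in>{-1, 0, 1::real}. if x = -1 then \<alpha> else if x = 0 then 1 - 2*\<alpha> else if x = 1 then \<alpha> else 0) = 1"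
    by simp
  then show "(\<integral>\<^sup>+ x. ennreal (if x = -1 then \<alpha> else if x = 0 then 1 - 2*\<alpha> else if x = 1 then \<alpha> else 0)
          \<partial>count_space (UNIV :: real set)) = 1"
    using assms by (subst nn_integral_count_space'[where A = "{-1, 0, 1}"])
      (auto simp: sum_ennreal)
qed (use assms in auto)

lemma set_pmf_rdist:
  assumes "0 \<le> \<alpha>" "\<alpha> \<le> 1/2"
  shows "set_pmf (rdist \<alpha>) \<subseteq> {-1, 0, 1}"
  using pmf_rdist[OF assms] by (auto simp: set_pmf_iff split: if_splits)

lemma set_pmf_rjoint:
  assumes "0 \<le> \<alpha>" "\<alpha> \<le> 1/2"
  shows "set_pmf (rjoint n \<alpha>) \<subseteq> PiE_dflt {1..n} 0 (\<lambda>_. {-1, 0, 1})"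
  unfolding rjoint_def
  using set_Pi_pmf_subset'[of "{1..n}" 0 "\<lambda>_. rdist \<alpha>"] set_pmf_rdist[OF assms]
  by (auto simp: PiE_dflt_def)

lemma finite_set_pmf_rjoint:
  assumes "0 \<le> \<alpha>" "\<alpha> \<le> 1/2"
  shows "finite (set_pmf (rjoint n \<alpha>))"
  using set_pmf_rjoint[OF assms] by (rule finite_subset) (auto intro: finite_PiE_dflt)

lemma rjoint_values:
  assumes "0 \<le> \<alpha>" "\<alpha> \<le> 1/2" "r \<in> set_pmf (rjoint n \<alpha>)"
  shows "r h \<in> {-1, 0, 1}"
  using set_pmf_rjoint[OF assms(1,2)] assms(3) by (auto simp: PiE_dflt_def)

lemma rjoint_0: "rjoint 0 \<alpha> = return_pmf (\<lambda>_. 0)"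
  by (simp add: rjoint_def)

lemma expectation_rjoint_Suc:
  assumes "0 \<le> \<alpha>" "\<alpha> \<le> 1/2"
  shows "measure_pmf.expectation (rjoint (Suc n) \<alpha>) \<phi> =
           \<alpha> * measure_pmf.expectation (rjoint n \<alpha>) (\<lambda>r. \<phi> (r(Suc n := -1)))
         + (1 - 2*\<alpha>) * measure_pmf.expectation (rjoint n \<alpha>) (\<lambda>r. \<phi> (r(Suc n := 0)))
         + \<alpha> * measure_pmf.expectation (rjoint n \<alpha>) (\<lambda>r. \<phi> (r(Suc n := 1)))"
proof -
  have "{1..Suc n} = insert (Suc n) {1..n}"
    by auto
  then have rjoint_Suc: "rjoint (Suc n) \<alpha> = rdist \<alpha> \<bind> (\<lambda>y. map_pmf (\<lambda>r. r(Suc n := y)) (rjoint n \<alpha>))"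
    unfolding rjoint_def by (simp only:) (subst Pi_pmf_insert', auto simp: map_pmf_def)
  show ?thesis
    unfolding rjoint_Suc
    using set_pmf_rdist[OF assms] finite_set_pmf_rjoint[OF assms] pmf_rdist[OF assms]
    by (subst pmf_expectation_bind[where A = "{-1, 0, 1}"]) (auto simp: algebra_simps)
qed

lemma expectation_rjoint_restrict:
  fixes \<phi> :: "(nat \<Rightarrow> real) \<Rightarrow> real"
  assumes "m \<le> n" and "\<And>r r'. (\<And>h. h \<in> {1..m} \<Longrightarrow> r h = r' h) \<Longrightarrow> \<phi> r = \<phi> r'"
  shows "measure_pmf.expectation (rjoint n \<alpha>) \<phi> = measure_pmf.expectation (rjoint m \<alpha>) \<phi>"
proof -
  have "rjoint m \<alpha> = map_pmf (\<lambda>r h. if h \<in> {1..m} then r h else 0) (rjoint n \<alpha>)"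
    unfolding rjoint_def using assms(1) by (intro Pi_pmf_subset) auto
  then have "measure_pmf.expectation (rjoint m \<alpha>) \<phi>
      = measure_pmf.expectation (rjoint n \<alpha>) (\<lambda>r. \<phi> (\<lambda>h. if h \<in> {1..m} then r h else 0))"
    by (simp only: integral_map_pmf)
  also have "\<dots> = measure_pmf.expectation (rjoint n \<alpha>) \<phi>"
    by (intro Bochner_Integration.integral_cong refl assms(2)[symmetric]) simp
  finally show ?thesis ..
qed

lemma tendsto_expectation_finite_support:
  fixes f :: "'b \<Rightarrow> 'a \<Rightarrow> real"
  assumes "finite (set_pmf p)" and "\<And>x. x \<in> set_pmf p \<Longrightarrow> ((\<lambda>t. f t x) \<longlongrightarrow> g x) F"
  shows "((\<lambda>t. measure_pmf.expectation p (f t)) \<longlongrightarrow> measure_pmf.expectation p g) F"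
  using assms by (simp add: integral_measure_pmf_real[OF assms(1)] tendsto_intros)

lemma expectation_pos_finite_support:
  fixes g :: "'a \<Rightarrow> real"
  assumes "finite (set_pmf p)" and "\<And>x. x \<in> set_pmf p \<Longrightarrow> 0 < g x"
  shows "0 < measure_pmf.expectation p g"
  using assms set_pmf_not_empty[of p]
  by (simp add: integral_measure_pmf_real[OF assms(1)]) (auto intro!: sum_pos simp: pmf_positive)

definition walk_pos :: "nat \<Rightarrow> (nat \<Rightarrow> real) \<Rightarrow> real" where
  "walk_pos n r = (\<Sum>h=1..n. r h)"

definition walk_moves :: "nat \<Rightarrow> (nat \<Rightarrow> real) \<Rightarrow> real" where
  "walk_moves n r = (\<Sum>h=1..n. \<bar>r h\<bar>)"

lemma walk_pos_upd: "walk_pos (Suc n) (r(Suc n := s)) = walk_pos n r + s"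
proof -
  have "(\<Sum>h=1..n. (r(Suc n := s)) h) = (\<Sum>h=1..n. r h)"
    by (rule sum.cong) auto
  then show ?thesis
    unfolding walk_pos_def by simp
qed

lemma walk_moves_upd: "walk_moves (Suc n) (r(Suc n := s)) = walk_moves n r + \<bar>s\<bar>"
proof -
  have "(\<Sum>h=1..n. \<bar>(r(Suc n := s)) h\<bar>) = (\<Sum>h=1..n. \<bar>r h\<bar>)"
    by (rule sum.cong) auto
  then show ?thesis
    unfolding walk_moves_def by simp
qed

definition walk_moment :: "real \<Rightarrow> real \<Rightarrow> nat \<Rightarrow> real \<Rightarrow> real" where
  "walk_moment \<alpha> z n j = measure_pmf.expectation (rjoint n \<alpha>)
     (\<lambda>r. z powr ((walk_moves n r - \<bar>j + walk_pos n r\<bar>) / 2))"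

lemma walk_moment_0: "walk_moment \<alpha> z 0 j = z powr (- \<bar>j\<bar> / 2)"
  unfolding walk_moment_def rjoint_0 walk_pos_def walk_moves_def by simp

lemma walk_moment_Suc:
  assumes "0 \<le> \<alpha>" "\<alpha> \<le> 1/2" "0 < z"
  shows "walk_moment \<alpha> z (Suc n) j = \<alpha> * sqrt z * walk_moment \<alpha> z n (j - 1)
           + (1 - 2*\<alpha>) * walk_moment \<alpha> z n j + \<alpha> * sqrt z * walk_moment \<alpha> z n (j + 1)"
proof -
  have step: "z powr ((walk_moves (Suc n) (r(Suc n := s)) - \<bar>j + walk_pos (Suc n) (r(Suc n := s))\<bar>) / 2)
      = z powr (\<bar>s\<bar> / 2) * z powr ((walk_moves n r - \<bar>(j + s) + walk_pos n r\<bar>) / 2)" for r s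
    unfolding walk_pos_upd walk_moves_upd powr_add[symmetric] by (simp add: field_simps)
  have "z powr (1 / 2) = sqrt z"
    using assms(3) by (simp add: powr_half_sqrt)
  then show ?thesis
    unfolding walk_moment_def expectation_rjoint_Suc[OF assms(1,2)] step
    by (simp add: algebra_simps)
qed

lemma walk_moment_uminus:
  assumes "0 \<le> \<alpha>" "\<alpha> \<le> 1/2" "0 < z"
  shows "walk_moment \<alpha> z n (- j) = walk_moment \<alpha> z n j"
proof (induction n arbitrary: j)
  case 0
  then show ?case by (simp add: walk_moment_0)
next
  case (Suc n)
  have "walk_moment \<alpha> z n (- j - 1) = walk_moment \<alpha> z n (j + 1)"
    "walk_moment \<alpha> z n (- j + 1) = walk_moment \<alpha> z n (j - 1)"
    using Suc.IH[of "j + 1"] Suc.IH[of "j - 1"] by simp_all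
  then show ?case
    unfolding walk_moment_Suc[OF assms] Suc.IH by (simp add: algebra_simps)
qed

lemma pow_mat_Suc_left:
  assumes "A \<in> carrier_mat n n"
  shows "A ^\<^sub>m Suc k = A * A ^\<^sub>m k"
proof (induction k)
  case (Suc k)
  have "A ^\<^sub>m Suc (Suc k) = (A * A ^\<^sub>m k) * A"
    using Suc by simp
  also have "\<dots> = A * A ^\<^sub>m Suc k"
    using assms by (simp add: assoc_mult_mat[of _ n n _ n _ n])
  finally show ?case .
qed (use assms in simp)

lemma Mmat_carrier: "Mmat d \<in> carrier_mat (d+1) (d+1)"
  by (simp add: Mmat_def)

lemma index_Mmat_mult_vec_0:
  assumes "1 \<le> d" "w \<in> carrier_vec (d+1)"
  shows "(Mmat d *\<^sub>v w) $ 0 = w $ 1"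
  using assms by (simp add: Mmat_def scalar_prod_def row_def if_distrib[of "\<lambda>x. x * _"] sum.If_cases)

lemma index_Mmat_mult_vec_inner:
  assumes "0 < j" "j < d" "w \<in> carrier_vec (d+1)"
  shows "(Mmat d *\<^sub>v w) $ j = (w $ (j - 1) + w $ (j + 1)) / 2"
proof -
  have "(Mmat d *\<^sub>v w) $ j = (\<Sum>k<d+1. Mmat d $$ (j, k) * w $ k)"
    using assms Mmat_carrier[of d] by (simp add: scalar_prod_def lessThan_atLeast0)
  also have "\<dots> = (\<Sum>k<d+1. (if k = j - 1 then w $ k / 2 else 0) + (if k = j + 1 then w $ k / 2 else 0))"
    by (rule sum.cong) (use assms in \<open>auto simp: Mmat_def\<close>)
  also have "\<dots> = (w $ (j - 1) + w $ (j + 1)) / 2"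
    using assms by (auto simp: sum.distrib add_divide_distrib)
  finally show ?thesis .
qed

lemma Amat_carrier: "Amat d \<alpha> z \<in> carrier_mat (d+1) (d+1)"
  by (simp add: Amat_def Mmat_def)

lemma index_Amat_mult_vec:
  assumes "i \<le> d" "w \<in> carrier_vec (d+1)"
  shows "(Amat d \<alpha> z *\<^sub>v w) $ i = (1 - 2*\<alpha>) * w $ i + 2 * \<alpha> * sqrt z * (Mmat d *\<^sub>v w) $ i"
proof -
  have "(Amat d \<alpha> z *\<^sub>v w) $ i
      = (\<Sum>k<d+1. (1 - 2*\<alpha>) * (if k = i then w $ k else 0) + 2 * \<alpha> * sqrt z * (Mmat d $$ (i, k) * w $ k))"
    using assms Mmat_carrier[of d]
    by (auto simp: Amat_def scalar_prod_def lessThan_atLeast0 algebra_simps intro!: sum.cong)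
  also have "\<dots> = (1 - 2*\<alpha>) * w $ i + 2 * \<alpha> * sqrt z * (Mmat d *\<^sub>v w) $ i"
    using assms Mmat_carrier[of d]
    by (simp add: sum.distrib sum_distrib_left[symmetric] scalar_prod_def lessThan_atLeast0)
  finally show ?thesis .
qed

lemma xi_carrier: "xi d z \<in> carrier_vec (d+1)"
  by (simp add: xi_def)

lemma Amat_pow_mult_xi_carrier: "Amat d \<alpha> z ^\<^sub>m n *\<^sub>v xi d z \<in> carrier_vec (d+1)"
  by (rule mult_mat_vec_carrier[OF pow_carrier_mat[OF Amat_carrier] xi_carrier])

(* The hypothesis j + n \<le> d keeps the recursion off row d, whose boundary entry does not
   match the walk. *)
lemma index_Amat_pow_mult_xi:
  assumes "0 \<le> \<alpha>" "\<alpha> \<le> 1/2" "0 < z" and "j + n \<le> d"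
  shows "(Amat d \<alpha> z ^\<^sub>m n *\<^sub>v xi d z) $ j = walk_moment \<alpha> z n j"
  using assms(4)
proof (induction n arbitrary: j)
  case 0
  then show ?case
    using Amat_carrier[of d \<alpha> z] by (simp add: xi_def walk_moment_0)
next
  case (Suc n)
  let ?w = "Amat d \<alpha> z ^\<^sub>m n *\<^sub>v xi d z"
  have w: "?w \<in> carrier_vec (d+1)"
    by (rule Amat_pow_mult_xi_carrier)
  have "Amat d \<alpha> z ^\<^sub>m Suc n *\<^sub>v xi d z = Amat d \<alpha> z *\<^sub>v ?w"
    unfolding pow_mat_Suc_left[OF Amat_carrier]
    by (rule assoc_mult_mat_vec[OF Amat_carrier pow_carrier_mat[OF Amat_carrier] xi_carrier])
  moreover have "(Amat d \<alpha> z *\<^sub>v ?w) $ j = walk_moment \<alpha> z (Suc n) j"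
  proof (cases "j = 0")
    case True
    then show ?thesis
      using Suc index_Mmat_mult_vec_0[OF _ w] index_Amat_mult_vec[OF _ w, of j]
        walk_moment_uminus[OF assms(1-3), of n 1]
      by (simp add: walk_moment_Suc[OF assms(1-3)] algebra_simps)
  next
    case False
    then show ?thesis
      using Suc index_Mmat_mult_vec_inner[OF _ _ w, of j] index_Amat_mult_vec[OF _ w, of j]
        Suc.IH[of "j - 1"] Suc.IH[of "j + 1"]
      by (simp add: walk_moment_Suc[OF assms(1-3)] algebra_simps of_nat_diff)
  qed
  ultimately show ?case
    by simp
qed

lemma zeta_Amat_pow_xi:
  assumes "0 \<le> \<alpha>" "\<alpha> \<le> 1/2" "0 < z"
  shows "zeta d \<bullet> (Amat d \<alpha> z ^\<^sub>m d *\<^sub>v xi d z) = walk_moment \<alpha> z d 0"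
  unfolding zeta_def
  by (subst scalar_prod_left_unit[OF Amat_pow_mult_xi_carrier]) (use index_Amat_pow_mult_xi[OF assms, of 0] in auto)

lemma exp_add_exp_eq_abs:
  fixes \<beta> N D :: real
  shows "exp (-\<beta> * ((N - D) / 2)) + exp (-\<beta> * ((N + D) / 2))
           = exp (-\<beta> * ((N - \<bar>D\<bar>) / 2)) * (1 + exp (-\<beta> * \<bar>D\<bar>))"
proof (cases "0 \<le> D")
  case True
  have "exp (-\<beta> * ((N + D) / 2)) = exp (-\<beta> * ((N - D) / 2)) * exp (-\<beta> * D)"
    by (subst exp_add[symmetric]) (simp add: field_simps)
  with True show ?thesis
    by (simp add: distrib_left)
next
  case False
  have "exp (-\<beta> * ((N - D) / 2)) = exp (-\<beta> * ((N + D) / 2)) * exp (\<beta> * D)"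
    by (subst exp_add[symmetric]) (simp add: field_simps)
  with False show ?thesis
    by (simp add: distrib_left)
qed

definition damping :: "real \<Rightarrow> real \<Rightarrow> real" where
  "damping \<beta> s = (if s = 0 then (1 + exp (-\<beta>)) / 2 else 1)"

lemma damped_weight_eq:
  assumes "s \<in> {-1, 0, 1}"
  shows "1 - (1 - exp (-\<beta>)) * ((1 + s) / 2) = damping \<beta> s * exp (-\<beta> * max s 0)"
  using assms by (auto simp: damping_def field_simps)

lemma tendsto_damping: "((\<lambda>\<beta>. damping \<beta> s) \<longlongrightarrow> (if s = 0 then 1/2 else 1)) at_top"
proof (cases "s = 0")
  case True
  have "((\<lambda>\<beta>::real. (1 + exp (-\<beta>)) / 2) \<longlongrightarrow> 1/2) at_top"
    by real_asymp
  with True show ?thesis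
    by (simp add: damping_def)
qed (simp add: damping_def)

lemma tendsto_one_plus_exp_neg:
  fixes c :: real
  assumes "0 \<le> c"
  shows "((\<lambda>\<beta>. 1 + exp (-\<beta> * c)) \<longlongrightarrow> (if c = 0 then 2 else 1)) at_top"
proof (cases "c = 0")
  case False
  with assms have "((\<lambda>\<beta>. 1 + exp (-\<beta> * c)) \<longlongrightarrow> 1) at_top"
    by real_asymp
  with False show ?thesis
    by simp
qed simp

lemma tendsto_powr_exp_scaled:
  fixes f g :: "real \<Rightarrow> real"
  assumes "(g \<longlongrightarrow> l) at_top" "0 < l" "0 < z"
    and "\<forall>\<^sub>F \<beta> in at_top. f \<beta> = exp (-\<beta> * t) * g \<beta>"
  shows "((\<lambda>\<beta>. f \<beta> powr (- ln z / \<beta>)) \<longlongrightarrow> z powr t) at_top"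
proof -
  have "((\<lambda>\<beta>. g \<beta> powr (- ln z / \<beta>)) \<longlongrightarrow> l powr 0) at_top"
    using assms(1,2)
    by (intro tendsto_powr tendsto_divide_0[OF tendsto_const]
        filterlim_at_top_imp_at_infinity filterlim_ident) auto
  then have "((\<lambda>\<beta>. z powr t * g \<beta> powr (- ln z / \<beta>)) \<longlongrightarrow> z powr t) at_top"
    using assms(2) tendsto_mult_left[of _ 1 _ "z powr t"] by simp
  moreover have "\<forall>\<^sub>F \<beta> in at_top. z powr t * g \<beta> powr (- ln z / \<beta>) = f \<beta> powr (- ln z / \<beta>)"
    using assms(4) order_tendstoD(1)[OF assms(1,2)] eventually_gt_at_top[of 0]
  proof eventually_elim
    case (elim \<beta>)
    have "exp (-\<beta> * t) powr (- ln z / \<beta>) = z powr t"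
      using elim assms(3) by (simp add: powr_def)
    with elim show ?case
      by (simp add: powr_mult)
  qed
  ultimately show ?thesis
    by (rule Lim_transform_eventually)
qed

lemma sum_max_sign_mult:
  assumes "\<tau> \<in> {-1, 1}"
  shows "(\<Sum>h=1..d. max (\<tau> * r h) 0) = (walk_moves d r + \<tau> * walk_pos d r) / 2"
proof -
  have "(\<Sum>h=1..d. max (\<tau> * r h) 0) = (\<Sum>h=1..d. (\<bar>r h\<bar> + \<tau> * r h) / 2)"
    using assms by (intro sum.cong) auto
  also have "\<dots> = (walk_moves d r + \<tau> * walk_pos d r) / 2"
    unfolding walk_moves_def walk_pos_def
    by (simp only: sum_divide_distrib[symmetric] sum.distrib sum_distrib_left)
  finally show ?thesis .
qed

lemma X1_eq_exp_mult:
  assumes "\<And>h. r h \<in> {-1, 0, 1}"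
  shows "X1 d \<beta> r = exp (-\<beta> * ((walk_moves d r - \<bar>walk_pos d r\<bar>) / 2))
           * ((\<Prod>h=1..d. damping \<beta> (r h)) * (1 + exp (-\<beta> * \<bar>walk_pos d r\<bar>)))"
proof -
  let ?G = "\<Prod>h=1..d. damping \<beta> (r h)"
  let ?N = "walk_moves d r" and ?D = "walk_pos d r"
  have prod_eq: "(\<Prod>h=1..d. 1 - (1 - exp (-\<beta>)) * rho r h \<tau>) = ?G * exp (-\<beta> * ((?N + \<tau> * ?D) / 2))"
    if \<tau>: "\<tau> \<in> {-1, 1}" for \<tau>
  proof -
    have "(\<Prod>h=1..d. 1 - (1 - exp (-\<beta>)) * rho r h \<tau>) = (\<Prod>h=1..d. damping \<beta> (r h) * exp (-\<beta> * max (\<tau> * r h) 0))"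
    proof (rule prod.cong[OF refl])
      fix h
      have "\<tau> * r h \<in> {-1, 0, 1}" "damping \<beta> (\<tau> * r h) = damping \<beta> (r h)"
        using \<tau> assms(1)[of h] by (auto simp: damping_def)
      then show "1 - (1 - exp (-\<beta>)) * rho r h \<tau> = damping \<beta> (r h) * exp (-\<beta> * max (\<tau> * r h) 0)"
        unfolding rho_def by (metis damped_weight_eq)
    qed
    also have "\<dots> = ?G * exp (-\<beta> * (\<Sum>h=1..d. max (\<tau> * r h) 0))"
      by (simp add: prod.distrib exp_sum sum_distrib_left)
    also have "\<dots> = ?G * exp (-\<beta> * ((?N + \<tau> * ?D) / 2))"
      by (simp only: sum_max_sign_mult[OF \<tau>])
    finally show ?thesis .
  qed
  have "X1 d \<beta> r = ?G * exp (-\<beta> * ((?N - ?D) / 2)) + ?G * exp (-\<beta> * ((?N + ?D) / 2))"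
    using prod_eq[of "-1"] prod_eq[of 1] by (simp add: X1_def)
  then show ?thesis
    unfolding distrib_left[symmetric] exp_add_exp_eq_abs by (simp only: mult_ac)
qed

lemma tendsto_X1_powr:
  assumes "\<And>h. r h \<in> {-1, 0, 1}" "0 < z"
  shows "((\<lambda>\<beta>. X1 d \<beta> r powr (- ln z / \<beta>)) \<longlongrightarrow> z powr ((walk_moves d r - \<bar>walk_pos d r\<bar>) / 2)) at_top"
proof (rule tendsto_powr_exp_scaled)
  show "((\<lambda>\<beta>. (\<Prod>h=1..d. damping \<beta> (r h)) * (1 + exp (-\<beta> * \<bar>walk_pos d r\<bar>)))
      \<longlongrightarrow> (\<Prod>h=1..d. if r h = 0 then 1/2 else 1) * (if \<bar>walk_pos d r\<bar> = 0 then 2 else 1)) at_top"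
    by (intro tendsto_mult tendsto_prod tendsto_damping tendsto_one_plus_exp_neg) simp
  show "\<forall>\<^sub>F \<beta> in at_top. X1 d \<beta> r = exp (-\<beta> * ((walk_moves d r - \<bar>walk_pos d r\<bar>) / 2))
      * ((\<Prod>h=1..d. damping \<beta> (r h)) * (1 + exp (-\<beta> * \<bar>walk_pos d r\<bar>)))"
    by (simp add: X1_eq_exp_mult[OF assms(1)])
qed (auto intro: prod_pos assms(2))

lemma sum_rho_mult_rho: "(\<Sum>\<tau>\<in>{-1, 1::real}. rho r 1 \<tau> * rho r 2 \<tau>) = (1 + r 1 * r 2) / 2"
  by (simp add: rho_def field_simps)

lemma X2_eq_exp_mult:
  assumes "r 1 \<in> {-1, 0, 1}" "r 2 \<in> {-1, 0, 1}"
  shows "X2 \<beta> r = exp (-\<beta> * max (r 1 * r 2) 0) * damping \<beta> (r 1 * r 2)"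
proof -
  have s: "r 1 * r 2 \<in> {-1, 0, 1}"
    using assms by auto
  show ?thesis
    unfolding X2_def sum_rho_mult_rho damped_weight_eq[OF s] by (rule mult.commute)
qed

lemma tendsto_X2_powr:
  assumes "r 1 \<in> {-1, 0, 1}" "r 2 \<in> {-1, 0, 1}" "0 < z"
  shows "((\<lambda>\<beta>. X2 \<beta> r powr (- ln z / \<beta>)) \<longlongrightarrow> z powr max (r 1 * r 2) 0) at_top"
  by (rule tendsto_powr_exp_scaled[OF tendsto_damping[of "r 1 * r 2"] _ assms(3)]) (simp_all add: X2_eq_exp_mult[OF assms(1,2)])

lemma expectation_rjoint_powr_max_mult:
  assumes "0 \<le> \<alpha>" "\<alpha> \<le> 1/2" "0 < z" "2 \<le> d"
  shows "measure_pmf.expectation (rjoint d \<alpha>) (\<lambda>r. z powr max (r 1 * r 2) 0) = 1 - 2*\<alpha>^2 + 2*\<alpha>^2*z"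
proof -
  have "measure_pmf.expectation (rjoint d \<alpha>) (\<lambda>r. z powr max (r 1 * r 2) 0)
      = measure_pmf.expectation (rjoint 2 \<alpha>) (\<lambda>r. z powr max (r 1 * r 2) 0)"
    by (rule expectation_rjoint_restrict) (use assms(4) in auto)
  also have "\<dots> = 1 - 2*\<alpha>^2 + 2*\<alpha>^2*z"
    using assms(3)
    by (simp add: numeral_2_eq_2 expectation_rjoint_Suc[OF assms(1,2)] rjoint_0 power2_eq_square algebra_simps)
  finally show ?thesis .
qed

lemma walk_moment_pos:
  assumes "0 \<le> \<alpha>" "\<alpha> \<le> 1/2" "0 < z"
  shows "0 < walk_moment \<alpha> z n j"
  unfolding walk_moment_def using finite_set_pmf_rjoint[OF assms(1,2)]
  by (rule expectation_pos_finite_support) (use assms(3) in simp)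

lemma tendsto_expectation_X1_powr:
  assumes "0 \<le> \<alpha>" "\<alpha> \<le> 1/2" "0 < z"
  shows "((\<lambda>\<beta>. measure_pmf.expectation (rjoint d \<alpha>) (\<lambda>r. X1 d \<beta> r powr (- ln z / \<beta>)))
           \<longlongrightarrow> walk_moment \<alpha> z d 0) at_top"
  unfolding walk_moment_def using finite_set_pmf_rjoint[OF assms(1,2)]
  by (rule tendsto_expectation_finite_support)
    (unfold add_0_left, rule tendsto_X1_powr[OF rjoint_values[OF assms(1,2)] assms(3)])

lemma tendsto_expectation_X2_powr:
  assumes "0 \<le> \<alpha>" "\<alpha> \<le> 1/2" "0 < z" "2 \<le> d"
  shows "((\<lambda>\<beta>. measure_pmf.expectation (rjoint d \<alpha>) (\<lambda>r. X2 \<beta> r powr (- ln z / \<beta>)))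
           \<longlongrightarrow> 1 - 2*\<alpha>^2 + 2*\<alpha>^2*z) at_top"
  unfolding expectation_rjoint_powr_max_mult[OF assms, symmetric]
  using finite_set_pmf_rjoint[OF assms(1,2)]
  by (rule tendsto_expectation_finite_support)
    (rule tendsto_X2_powr[OF rjoint_values[OF assms(1,2)] rjoint_values[OF assms(1,2)] assms(3)])

lemma Fd_eq_walk_moment:
  assumes "0 \<le> \<alpha>" "\<alpha> \<le> 1/2" "0 < z" "z < 1"
  shows "Fd d \<alpha> z = (ln (walk_moment \<alpha> z d 0) - real d / 2 * ln (1 - 2*\<alpha>^2 + 2*\<alpha>^2*z)) / - ln z"
  using zeta_Amat_pow_xi[OF assms(1-3)] assms(3,4) unfolding Fd_def by (simp add: field_simps)

theorem proposition2p10: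
  fixes d :: nat and z \<alpha> :: real
  assumes "d \<ge> 3" and "0 < z" and "z < 1" and "0 < \<alpha>" and "\<alpha> < 1/2"
  shows "((\<lambda>\<beta>. let y = - ln z / \<beta> in
            (1 / (\<beta> * y)) *
              (ln (measure_pmf.expectation (rjoint d \<alpha>) (\<lambda>r. X1 d \<beta> r powr y))
               - real d / 2 * ln (measure_pmf.expectation (rjoint d \<alpha>) (\<lambda>r. X2 \<beta> r powr y))))
         \<longlongrightarrow> Fd d \<alpha> z) at_top"
proof -
  have \<alpha>: "0 \<le> \<alpha>" "\<alpha> \<le> 1/2" and "2 \<le> d" and "ln z < 0"
    using assms by simp_all
  let ?E1 = "\<lambda>\<beta>. measure_pmf.expectation (rjoint d \<alpha>) (\<lambda>r. X1 d \<beta> r powr (- ln z / \<beta>))"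
  let ?E2 = "\<lambda>\<beta>. measure_pmf.expectation (rjoint d \<alpha>) (\<lambda>r. X2 \<beta> r powr (- ln z / \<beta>))"
  have "\<alpha>^2 < (1/2)^2"
    using assms(4,5) by (intro power_strict_mono) auto
  then have "0 < 1 - 2*\<alpha>^2 + 2*\<alpha>^2*z"
    by (intro add_pos_nonneg) (use assms(2) in \<open>auto simp: power_divide\<close>)
  then have "((\<lambda>\<beta>. (ln (?E1 \<beta>) - real d / 2 * ln (?E2 \<beta>)) / - ln z) \<longlongrightarrow> Fd d \<alpha> z) at_top"
    unfolding Fd_eq_walk_moment[OF \<alpha> assms(2,3)] using \<open>2 \<le> d\<close> \<open>ln z < 0\<close>
    by (intro tendsto_intros tendsto_expectation_X1_powr tendsto_expectation_X2_powr)
      (use \<alpha> assms(2) walk_moment_pos[OF \<alpha> assms(2), of d 0] in auto)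
  moreover have "\<forall>\<^sub>F \<beta> in at_top. (ln (?E1 \<beta>) - real d / 2 * ln (?E2 \<beta>)) / - ln z =
      (let y = - ln z / \<beta> in (1 / (\<beta> * y)) *
         (ln (measure_pmf.expectation (rjoint d \<alpha>) (\<lambda>r. X1 d \<beta> r powr y))
          - real d / 2 * ln (measure_pmf.expectation (rjoint d \<alpha>) (\<lambda>r. X2 \<beta> r powr y))))"
    using eventually_gt_at_top[of 0] by eventually_elim (simp add: Let_def)
  ultimately show ?thesis
    by (rule Lim_transform_eventually)
qed

end
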